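(* Let $p\colon H\to K$ be a morphism of smooth 2-groups. Then the canonical functor $\kappa\colon\ker^{\mathtt h}(p)\to\mathrm{Cart}$ is a Grothendieck fibration in groupoids.
   Context: $\mathrm{Cart}$ is the category of manifolds diffeomorphic to some $\mathbb R^n$ with smooth maps. A functor $\pi\colon D\to C$ is a Grothendieck fibration in groupoids if every $f\colon c\to\pi(d)$ has a lift $\hat f\colon\hat c\to d$, and every morphism of $D$ is $\pi$-Cartesian (for $\zeta_{12}\colon d_1\to d_2$, $\zeta_{02}\colon d_0\to d_2$ and $f_{01}\colon\pi(d_0)\to\pi(d_1)$ with $\pi(\zeta_{12})f_{01}=\pi(\zeta_{02})$ there is a unique $\hat f_{01}$ over $f_{01}$ with $\zeta_{12}\hat f_{01}=\zeta_{02}$). Smooth 2-groups are group objects (with unit 1-morphism $u$, product, coherent associator and unitors, and $(\otimes,\mathrm{pr}_1)$ an equivalence) in the 2-category of categories equipped with a Grothendieck fibration in groupoids to $\mathrm{Cart}$, whose terminal object is $\mathrm{id}_{\mathrm{Cart}}$; morphisms are functors strictly over $\mathrm{Cart}$ with coherent monoidal structure. For $\pi_H\colon H\to\mathrm{Cart}$, $\ker^{\mathtt h}(p)$ is the homotopy pullback of $\mathrm{Cart}\xrightarrow{u_K}K\xleftarrow{p}H$: its objects are pairs $(h,\eta)$ with $h\in H$ and $\eta\colon p(h)\to u_K(\pi_H(h))$ an isomorphism in $K$ projecting to an identity, and its morphisms $(h_0,\eta_0)\to(h_1,\eta_1)$ are morphisms $\zeta\colon h_0\to h_1$ with $\eta_1\circ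 p(\zeta)=u_K(\pi_H(\zeta))\circ\eta_0$; $\kappa(h,\eta)=\pi_H(h)$, $\kappa(\zeta)=\pi_H(\zeta)$. *)

theory Defs
  imports "HOL-Analysis.Analysis"
begin

record ('o, 'm) category =
  obj :: "'o set"
  arr :: "'m set"
  dom :: "'m \<Rightarrow> 'o"
  cod :: "'m \<Rightarrow> 'o"
  ident :: "'o \<Rightarrow> 'm"
  comp :: "'m \<Rightarrow> 'm \<Rightarrow> 'm"   \<comment> \<open>comp C g f = g \<circ> f\<close>

definition hom :: "('o, 'm) category \<Rightarrow> 'o \<Rightarrow> 'o \<Rightarrow> 'm set" where
  "hom C a b = {f \<in> arr C. dom C f = a \<and> cod C f = b}"

definition is_category :: "('o, 'm) category \<Rightarrow> bool" where
  "is_category C \<longleftrightarrow>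
     (\<forall>f\<in>arr C. dom C f \<in> obj C \<and> cod C f \<in> obj C) \<and>
     (\<forall>a\<in>obj C. ident C a \<in> hom C a a) \<and>
     (\<forall>f\<in>arr C. \<forall>g\<in>arr C. cod C f = dom C g \<longrightarrow> comp C g f \<in> hom C (dom C f) (cod C g)) \<and>
     (\<forall>f\<in>arr C. comp C f (ident C (dom C f)) = f \<and> comp C (ident C (cod C f)) f = f) \<and>
     (\<forall>f\<in>arr C. \<forall>g\<in>arr C. \<forall>h\<in>arr C. cod C f = dom C g \<longrightarrow> cod C g = dom C h \<longrightarrow>
        comp C h (comp C g f) = comp C (comp C h g) f)"

definition is_iso :: "('o, 'm) category \<Rightarrow> 'm \<Rightarrow> bool" where
  "is_iso C f \<longleftrightarrow> f \<in> arr C \<and>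
     (\<exists>g\<in>hom C (cod C f) (dom C f). comp C g f = ident C (dom C f) \<and> comp C f g = ident C (cod C f))"

definition is_functor ::
  "('a, 'am) category \<Rightarrow> ('b, 'bm) category \<Rightarrow> ('a \<Rightarrow> 'b) \<Rightarrow> ('am \<Rightarrow> 'bm) \<Rightarrow> bool" where
  "is_functor C D Fo Fa \<longleftrightarrow>
     (\<forall>a\<in>obj C. Fo a \<in> obj D) \<and>
     (\<forall>f\<in>arr C. Fa f \<in> hom D (Fo (dom C f)) (Fo (cod C f))) \<and>
     (\<forall>a\<in>obj C. Fa (ident C a) = ident D (Fo a)) \<and>
     (\<forall>f\<in>arr C. \<forall>g\<in>arr C. cod C f = dom C g \<longrightarrow> Fa (comp C g f) = comp D (Fa g) (Fa f))"

definition fib_in_groupoids ::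
  "('d, 'dm) category \<Rightarrow> ('c, 'cm) category \<Rightarrow> ('d \<Rightarrow> 'c) \<Rightarrow> ('dm \<Rightarrow> 'cm) \<Rightarrow> bool" where
  "fib_in_groupoids D C po pa \<longleftrightarrow>
     is_functor D C po pa \<and>
     \<comment> \<open>existence of lifts\<close>
     (\<forall>d\<in>obj D. \<forall>c f. f \<in> hom C c (po d) \<longrightarrow>
        (\<exists>c' f'. f' \<in> hom D c' d \<and> pa f' = f)) \<and>
     \<comment> \<open>every morphism is cartesian\<close>
     (\<forall>z12\<in>arr D. \<forall>z02\<in>arr D. \<forall>f01.
        cod D z12 = cod D z02 \<longrightarrow>
        f01 \<in> hom C (po (dom D z02)) (po (dom D z12)) \<longrightarrow>
        comp C (pa z12) f01 = pa z02 \<longrightarrow>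
        (\<exists>!g. g \<in> hom D (dom D z02) (dom D z12) \<and> pa g = f01 \<and> comp D z12 g = z02))"

definition fibprod ::
  "('h, 'hm) category \<Rightarrow> ('h \<Rightarrow> 'c) \<Rightarrow> ('hm \<Rightarrow> 'cm) \<Rightarrow> ('h \<times> 'h, 'hm \<times> 'hm) category" where
  "fibprod H po pa =
     \<lparr> obj = {(x, y). x \<in> obj H \<and> y \<in> obj H \<and> po x = po y},
       arr = {(f, g). f \<in> arr H \<and> g \<in> arr H \<and> pa f = pa g},
       dom = (\<lambda>(f, g). (dom H f, dom H g)),
       cod = (\<lambda>(f, g). (cod H f, cod H g)),
       ident = (\<lambda>(x, y). (ident H x, ident H y)),
       comp = (\<lambda>(f', g') (f, g). (comp H f' f, comp H g' g)) \<rparr>"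

definition vert_nat_iso ::
  "('c, 'cm) category \<Rightarrow> ('a, 'am) category \<Rightarrow> ('d, 'dm) category \<Rightarrow>
   ('d \<Rightarrow> 'c) \<Rightarrow> ('dm \<Rightarrow> 'cm) \<Rightarrow>
   ('a \<Rightarrow> 'd) \<Rightarrow> ('am \<Rightarrow> 'dm) \<Rightarrow> ('a \<Rightarrow> 'd) \<Rightarrow> ('am \<Rightarrow> 'dm) \<Rightarrow> ('a \<Rightarrow> 'dm) \<Rightarrow> bool" where
  "vert_nat_iso B A D po pa Fo Fa Go Ga eta \<longleftrightarrow>
     (\<forall>a\<in>obj A. eta a \<in> hom D (Fo a) (Go a) \<and> is_iso D (eta a) \<and>
        pa (eta a) = ident B (po (Fo a))) \<and>
     (\<forall>f\<in>arr A. comp D (eta (cod A f)) (Fa f) = comp D (Ga f) (eta (dom A f)))"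

definition equivalence_over ::
  "('c, 'cm) category \<Rightarrow> ('d, 'dm) category \<Rightarrow> ('d \<Rightarrow> 'c) \<Rightarrow> ('dm \<Rightarrow> 'cm) \<Rightarrow>
   ('d \<Rightarrow> 'd) \<Rightarrow> ('dm \<Rightarrow> 'dm) \<Rightarrow> bool" where
  "equivalence_over B D po pa Fo Fa \<longleftrightarrow>
     (\<exists>Go Ga eta eps.
        is_functor D D Go Ga \<and>
        (\<forall>x\<in>obj D. po (Go x) = po x) \<and> (\<forall>f\<in>arr D. pa (Ga f) = pa f) \<and>
        vert_nat_iso B D D po pa (Go \<circ> Fo) (Ga \<circ> Fa) id id eta \<and>
        vert_nat_iso B D D po pa (Fo \<circ> Go) (Fa \<circ> Ga) id id eps)"

record ('c, 'cm, 'h, 'hm) grp2 =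
  gcat :: "('h, 'hm) category"
  gprj_o :: "'h \<Rightarrow> 'c"
  gprj_a :: "'hm \<Rightarrow> 'cm"
  gunit_o :: "'c \<Rightarrow> 'h"
  gunit_a :: "'cm \<Rightarrow> 'hm"
  gtens_o :: "'h \<Rightarrow> 'h \<Rightarrow> 'h"
  gtens_a :: "'hm \<Rightarrow> 'hm \<Rightarrow> 'hm"
  gassoc :: "'h \<Rightarrow> 'h \<Rightarrow> 'h \<Rightarrow> 'hm"   \<comment> \<open>(x\<otimes>y)\<otimes>z \<rightarrow> x\<otimes>(y\<otimes>z)\<close>
  glunit :: "'h \<Rightarrow> 'hm"               \<comment> \<open>u(\<pi> x)\<otimes>x \<rightarrow> x\<close>
  grunit :: "'h \<Rightarrow> 'hm"               \<comment> \<open>x\<otimes>u(\<pi> x) \<rightarrow> x\<close>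

definition two_group_over :: "('c, 'cm) category \<Rightarrow> ('c, 'cm, 'h, 'hm) grp2 \<Rightarrow> bool" where
  "two_group_over B G \<longleftrightarrow>
    (let H = gcat G; po = gprj_o G; pa = gprj_a G; uo = gunit_o G; ua = gunit_a G;
         to = gtens_o G; ta = gtens_a G; al = gassoc G; l = glunit G; r = grunit G;
         HH = fibprod H po pa in
     is_category H \<and> fib_in_groupoids H B po pa \<and>
     \<comment> \<open>unit: a functor Cart \<rightarrow> H strictly over the base\<close>
     is_functor B H uo ua \<and> (\<forall>c\<in>obj B. po (uo c) = c) \<and> (\<forall>f\<in>arr B. pa (ua f) = f) \<and>
     \<comment> \<open>product: a functor H \<times>_B H \<rightarrow> H strictly over the base\<close>
     is_functor HH H (case_prod to) (case_prod ta) \<and>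
     (\<forall>(x, y)\<in>obj HH. po (to x y) = po x) \<and> (\<forall>(f, g)\<in>arr HH. pa (ta f g) = pa f) \<and>
     \<comment> \<open>associator: vertical natural isomorphism\<close>
     (\<forall>x\<in>obj H. \<forall>y\<in>obj H. \<forall>z\<in>obj H. po x = po y \<longrightarrow> po y = po z \<longrightarrow>
        al x y z \<in> hom H (to (to x y) z) (to x (to y z)) \<and> is_iso H (al x y z) \<and>
        pa (al x y z) = ident B (po x)) \<and>
     (\<forall>f\<in>arr H. \<forall>g\<in>arr H. \<forall>h\<in>arr H. pa f = pa g \<longrightarrow> pa g = pa h \<longrightarrow>
        comp H (al (cod H f) (cod H g) (cod H h)) (ta (ta f g) h) =
        comp H (ta f (ta g h)) (al (dom H f) (dom H g) (dom H h))) \<and>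
     \<comment> \<open>unitors: vertical natural isomorphisms\<close>
     (\<forall>x\<in>obj H. l x \<in> hom H (to (uo (po x)) x) x \<and> is_iso H (l x) \<and> pa (l x) = ident B (po x)) \<and>
     (\<forall>f\<in>arr H. comp H (l (cod H f)) (ta (ua (pa f)) f) = comp H f (l (dom H f))) \<and>
     (\<forall>x\<in>obj H. r x \<in> hom H (to x (uo (po x))) x \<and> is_iso H (r x) \<and> pa (r x) = ident B (po x)) \<and>
     (\<forall>f\<in>arr H. comp H (r (cod H f)) (ta f (ua (pa f))) = comp H f (r (dom H f))) \<and>
     \<comment> \<open>pentagon\<close>
     (\<forall>w\<in>obj H. \<forall>x\<in>obj H. \<forall>y\<in>obj H. \<forall>z\<in>obj H.
        po w = po x \<longrightarrow> po x = po y \<longrightarrow> po y = po z \<longrightarrow>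
        comp H (al w x (to y z)) (al (to w x) y z) =
        comp H (ta (ident H w) (al x y z)) (comp H (al w (to x y) z) (ta (al w x y) (ident H z)))) \<and>
     \<comment> \<open>triangle\<close>
     (\<forall>x\<in>obj H. \<forall>y\<in>obj H. po x = po y \<longrightarrow>
        comp H (ta (ident H x) (l y)) (al x (uo (po x)) y) = ta (r x) (ident H y)) \<and>
     \<comment> \<open>(\<otimes>, pr1) is an equivalence\<close>
     equivalence_over B HH (po \<circ> fst) (pa \<circ> fst)
        (\<lambda>(x, y). (to x y, x)) (\<lambda>(f, g). (ta f g, f)))"

record ('h, 'hm, 'c, 'k, 'km) grp2_hom =
  mfun_o :: "'h \<Rightarrow> 'k"
  mfun_a :: "'hm \<Rightarrow> 'km"
  mmu :: "'h \<Rightarrow> 'h \<Rightarrow> 'km"     \<comment> \<open>p x \<otimes> p y \<rightarrow> p (x \<otimes> y)\<close>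
  meps :: "'c \<Rightarrow> 'km"           \<comment> \<open>u_K c \<rightarrow> p (u_H c)\<close>

definition two_group_hom ::
  "('c, 'cm) category \<Rightarrow> ('c, 'cm, 'h, 'hm) grp2 \<Rightarrow> ('c, 'cm, 'k, 'km) grp2 \<Rightarrow>
   ('h, 'hm, 'c, 'k, 'km) grp2_hom \<Rightarrow> bool" where
  "two_group_hom B G K P \<longleftrightarrow>
    (let H = gcat G; KC = gcat K; fo = mfun_o P; fa = mfun_a P; mu = mmu P; e = meps P;
         toH = gtens_o G; taH = gtens_a G; toK = gtens_o K; taK = gtens_a K in
     is_functor H KC fo fa \<and>
     (\<forall>x\<in>obj H. gprj_o K (fo x) = gprj_o G x) \<and> (\<forall>f\<in>arr H. gprj_a K (fa f) = gprj_a G f) \<and>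
     (\<forall>x\<in>obj H. \<forall>y\<in>obj H. gprj_o G x = gprj_o G y \<longrightarrow>
        mu x y \<in> hom KC (toK (fo x) (fo y)) (fo (toH x y)) \<and> is_iso KC (mu x y) \<and>
        gprj_a K (mu x y) = ident B (gprj_o G x)) \<and>
     (\<forall>f\<in>arr H. \<forall>g\<in>arr H. gprj_a G f = gprj_a G g \<longrightarrow>
        comp KC (mu (cod H f) (cod H g)) (taK (fa f) (fa g)) =
        comp KC (fa (taH f g)) (mu (dom H f) (dom H g))) \<and>
     (\<forall>x\<in>obj H. \<forall>y\<in>obj H. \<forall>z\<in>obj H. gprj_o G x = gprj_o G y \<longrightarrow> gprj_o G y = gprj_o G z \<longrightarrow>
        comp KC (fa (gassoc G x y z)) (comp KC (mu (toH x y) z) (taK (mu x y) (ident KC (fo z)))) =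
        comp KC (mu x (toH y z)) (comp KC (taK (ident KC (fo x)) (mu y z))
          (gassoc K (fo x) (fo y) (fo z)))) \<and>
     (\<forall>c\<in>obj B. e c \<in> hom KC (gunit_o K c) (fo (gunit_o G c)) \<and> is_iso KC (e c) \<and>
        gprj_a K (e c) = ident B c) \<and>
     (\<forall>f\<in>arr B. comp KC (e (cod B f)) (gunit_a K f) = comp KC (fa (gunit_a G f)) (e (dom B f))) \<and>
     (\<forall>x\<in>obj H.
        comp KC (fa (glunit G x)) (comp KC (mu (gunit_o G (gprj_o G x)) x)
          (taK (e (gprj_o G x)) (ident KC (fo x)))) = glunit K (fo x)) \<and>
     (\<forall>x\<in>obj H.
        comp KC (fa (grunit G x)) (comp KC (mu x (gunit_o G (gprj_o G x)))
          (taK (ident KC (fo x)) (e (gprj_o G x)))) = grunit K (fo x)))"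

definition hker ::
  "('c, 'cm) category \<Rightarrow> ('c, 'cm, 'h, 'hm) grp2 \<Rightarrow> ('c, 'cm, 'k, 'km) grp2 \<Rightarrow>
   ('h, 'hm, 'c, 'k, 'km) grp2_hom \<Rightarrow>
   ('h \<times> 'km, ('h \<times> 'km) \<times> 'hm \<times> ('h \<times> 'km)) category" where
  "hker B G K P =
    (let H = gcat G; KC = gcat K; ob =
       {(h, eta). h \<in> obj H \<and> eta \<in> hom KC (mfun_o P h) (gunit_o K (gprj_o G h)) \<and>
          is_iso KC eta \<and> gprj_a K eta = ident B (gprj_o G h)} in
     \<lparr> obj = ob,
       arr = {(a, z, b). a \<in> ob \<and> b \<in> ob \<and> z \<in> hom H (fst a) (fst b) \<and>
                comp KC (snd b) (mfun_a P z) = comp KC (gunit_a K (gprj_a G z)) (snd a)},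
       dom = (\<lambda>(a, z, b). a),
       cod = (\<lambda>(a, z, b). b),
       ident = (\<lambda>a. (a, ident H (fst a), a)),
       comp = (\<lambda>(b', z', c) (a, z, b). (a, comp H z' z, c)) \<rparr>)"

definition hker_proj_o :: "('c, 'cm, 'h, 'hm) grp2 \<Rightarrow> 'h \<times> 'km \<Rightarrow> 'c" where
  "hker_proj_o G = (\<lambda>(h, eta). gprj_o G h)"

definition hker_proj_a :: "('c, 'cm, 'h, 'hm) grp2 \<Rightarrow> ('h \<times> 'km) \<times> 'hm \<times> ('h \<times> 'km) \<Rightarrow> 'cm" where
  "hker_proj_a G = (\<lambda>(a, z, b). gprj_a G z)"

section \<open>The category Cart (skeletal model: objects n stand for R^n)\<close>

definition Rn :: "nat \<Rightarrow> (nat \<Rightarrow> real) set" where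
  "Rn n = {x. \<forall>i\<ge>n. x i = 0}"

definition pderiv_Rn :: "((nat \<Rightarrow> real) \<Rightarrow> real) \<Rightarrow> nat \<Rightarrow> (nat \<Rightarrow> real) \<Rightarrow> real" where
  "pderiv_Rn \<phi> i x = deriv (\<lambda>t. \<phi> (x(i := x i + t))) 0"

fun Ck_Rn :: "nat \<Rightarrow> nat \<Rightarrow> ((nat \<Rightarrow> real) \<Rightarrow> real) \<Rightarrow> bool" where
  "Ck_Rn n 0 \<phi> = continuous_on (Rn n) \<phi>"
| "Ck_Rn n (Suc k) \<phi> = (continuous_on (Rn n) \<phi> \<and>
     (\<forall>i<n. \<forall>x\<in>Rn n. (\<lambda>t. \<phi> (x(i := x i + t))) differentiable (at 0)) \<and>
     (\<forall>i<n. Ck_Rn n k (pderiv_Rn \<phi> i)))"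

definition smooth_Rn :: "nat \<Rightarrow> ((nat \<Rightarrow> real) \<Rightarrow> real) \<Rightarrow> bool" where
  "smooth_Rn n \<phi> \<longleftrightarrow> (\<forall>k. Ck_Rn n k \<phi>)"

type_synonym cart_arr = "nat \<times> nat \<times> ((nat \<Rightarrow> real) \<Rightarrow> (nat \<Rightarrow> real))"

definition Cart :: "(nat, cart_arr) category" where
  "Cart =
     \<lparr> obj = UNIV,
       arr = {(n, m, f). (\<forall>x\<in>Rn n. f x \<in> Rn m) \<and> (\<forall>x. x \<notin> Rn n \<longrightarrow> f x = (\<lambda>_. 0)) \<and>
                         (\<forall>j<m. smooth_Rn n (\<lambda>x. f x j))},
       dom = (\<lambda>(n, m, f). n),
       cod = (\<lambda>(n, m, f). m),
       ident = (\<lambda>n. (n, n, \<lambda>x. if x \<in> Rn n then x else (\<lambda>_. 0))),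
       comp = (\<lambda>(m', k, g) (n, m, f). (n, k, \<lambda>x. if x \<in> Rn n then g (f x) else (\<lambda>_. 0))) \<rparr>"

definition smooth_2group :: "(nat, cart_arr, 'h, 'hm) grp2 \<Rightarrow> bool" where
  "smooth_2group G \<longleftrightarrow> two_group_over Cart G"

definition smooth_2group_hom ::
  "(nat, cart_arr, 'h, 'hm) grp2 \<Rightarrow> (nat, cart_arr, 'k, 'km) grp2 \<Rightarrow>
   ('h, 'hm, nat, 'k, 'km) grp2_hom \<Rightarrow> bool" where
  "smooth_2group_hom G K P \<longleftrightarrow> smooth_2group G \<and> smooth_2group K \<and> two_group_hom Cart G K P"

end

theory Submission
  imports Defs
begin

text \<open>An object of the homotopy kernel is a point h of H together with a vertical isomorphism
  e from p h to u (\<pi> h); only the fibred structure of H, K, p and u matters, not the monoidal one.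
  A base arrow f into \<pi> h is lifted by lifting it to some z in H and transporting e along z:
  the Cartesian property of u f in K factors e \<circ> p z through u f by a vertical arrow, and
  vertical arrows of a fibration in groupoids are invertible. Cartesian factorizations in the
  kernel are those of H; that the factor w is compatible with the chosen isomorphisms follows
  because e1 \<circ> p w and u (\<pi> w) \<circ> e0 lie over the same base arrow and become equal after composing
  with u z1, and Cartesian arrows of K cancel on the left.\<close>

lemma category_obj_of_hom:
  assumes "is_category C" and "f \<in> hom C a b"
  shows "a \<in> obj C" and "b \<in> obj C"
  using assms unfolding is_category_def hom_def by blast+

lemma category_ident_in_hom: "is_category C \<Longrightarrow> a \<in> obj C \<Longrightarrow> ident C a \<in> hom C a a"
  unfolding is_category_def by blast

lemma category_comp_in_hom:
  "is_category C \<Longrightarrow> f \<in> hom C a b \<Longrightarrow> g \<in> hom C b c \<Longrightarrow> comp C g f \<in> hom C a c"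
  unfolding is_category_def hom_def by simp

lemma category_comp_ident_left: "is_category C \<Longrightarrow> f \<in> hom C a b \<Longrightarrow> comp C (ident C b) f = f"
  unfolding is_category_def hom_def by fastforce

lemma category_comp_ident_right: "is_category C \<Longrightarrow> f \<in> hom C a b \<Longrightarrow> comp C f (ident C a) = f"
  unfolding is_category_def hom_def by fastforce

lemma category_comp_assoc:
  "is_category C \<Longrightarrow> f \<in> hom C a b \<Longrightarrow> g \<in> hom C b c \<Longrightarrow> h \<in> hom C c d \<Longrightarrow>
    comp C h (comp C g f) = comp C (comp C h g) f"
  unfolding is_category_def hom_def by simp

lemma functor_obj: "is_functor C D Fo Fa \<Longrightarrow> a \<in> obj C \<Longrightarrow> Fo a \<in> obj D"
  unfolding is_functor_def by blast

lemma functor_hom: "is_functor C D Fo Fa \<Longrightarrow> f \<in> hom C a b \<Longrightarrow> Fa f \<in> hom D (Fo a) (Fo b)"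
  unfolding is_functor_def hom_def by simp

lemma functor_ident: "is_functor C D Fo Fa \<Longrightarrow> a \<in> obj C \<Longrightarrow> Fa (ident C a) = ident D (Fo a)"
  unfolding is_functor_def by blast

lemma functor_comp:
  "is_functor C D Fo Fa \<Longrightarrow> f \<in> hom C a b \<Longrightarrow> g \<in> hom C b c \<Longrightarrow>
    Fa (comp C g f) = comp D (Fa g) (Fa f)"
  unfolding is_functor_def hom_def by simp

lemma is_functorI:
  assumes "\<And>a. a \<in> obj C \<Longrightarrow> Fo a \<in> obj D"
    and "\<And>f a b. f \<in> hom C a b \<Longrightarrow> Fa f \<in> hom D (Fo a) (Fo b)"
    and "\<And>a. a \<in> obj C \<Longrightarrow> Fa (ident C a) = ident D (Fo a)"
    and "\<And>f g a b c. f \<in> hom C a b \<Longrightarrow> g \<in> hom C b c \<Longrightarrow> Fa (comp C g f) = comp D (Fa g) (Fa f)"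
  shows "is_functor C D Fo Fa"
  unfolding is_functor_def
proof (intro conjI ballI impI)
  fix f assume "f \<in> arr C"
  then show "Fa f \<in> hom D (Fo (dom C f)) (Fo (cod C f))" using assms(2) by (simp add: hom_def)
next
  fix f g assume "f \<in> arr C" "g \<in> arr C" "cod C f = dom C g"
  then show "Fa (comp C g f) = comp D (Fa g) (Fa f)"
    using assms(4)[of f _ "dom C g"] by (simp add: hom_def)
qed (use assms(1,3) in simp_all)

lemma fib_in_groupoidsI:
  assumes "is_functor D C po pa"
    and "\<And>d c f. d \<in> obj D \<Longrightarrow> f \<in> hom C c (po d) \<Longrightarrow> \<exists>d' f'. f' \<in> hom D d' d \<and> pa f' = f"
    and "\<And>z z' f d0 d1 d2. z \<in> hom D d1 d2 \<Longrightarrow> z' \<in> hom D d0 d2 \<Longrightarrow>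
      f \<in> hom C (po d0) (po d1) \<Longrightarrow> comp C (pa z) f = pa z' \<Longrightarrow>
      \<exists>!g. g \<in> hom D d0 d1 \<and> pa g = f \<and> comp D z g = z'"
  shows "fib_in_groupoids D C po pa"
  unfolding fib_in_groupoids_def
proof (intro conjI ballI allI impI)
  fix z12 z02 f01
  assume "z12 \<in> arr D" "z02 \<in> arr D" "cod D z12 = cod D z02"
    and "f01 \<in> hom C (po (dom D z02)) (po (dom D z12))" "comp C (pa z12) f01 = pa z02"
  then show "\<exists>!g. g \<in> hom D (dom D z02) (dom D z12) \<and> pa g = f01 \<and> comp D z12 g = z02"
    using assms(3)[of z12 "dom D z12" "cod D z12" z02 "dom D z02"] by (simp add: hom_def)
qed (use assms(1,2) in blast)+

locale fibred_category =
  fixes D :: "('d, 'dm) category" and B :: "('c, 'cm) category"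
    and po :: "'d \<Rightarrow> 'c" and pa :: "'dm \<Rightarrow> 'cm"
  assumes category: "is_category D"
    and fibration: "fib_in_groupoids D B po pa"
begin

lemma projection_functor: "is_functor D B po pa"
  using fibration unfolding fib_in_groupoids_def by blast

lemma lift:
  assumes "d \<in> obj D" and "f \<in> hom B c (po d)"
  obtains d' f' where "f' \<in> hom D d' d" and "pa f' = f" and "d' \<in> obj D" and "po d' = c"
proof -
  obtain d' f' where f': "f' \<in> hom D d' d" "pa f' = f"
    using assms fibration unfolding fib_in_groupoids_def by blast
  moreover have "d' \<in> obj D" using category_obj_of_hom[OF category f'(1)] by blast
  moreover have "po d' = c"
    using functor_hom[OF projection_functor f'(1)] f'(2) assms(2) by (simp add: hom_def)
  ultimately show thesis using that by blast
qed

lemma cartesian_factor: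
  assumes "z \<in> hom D d1 d2" and "z' \<in> hom D d0 d2" and "f \<in> hom B (po d0) (po d1)"
    and "comp B (pa z) f = pa z'"
  shows "\<exists>!g. g \<in> hom D d0 d1 \<and> pa g = f \<and> comp D z g = z'"
proof -
  have z: "z \<in> arr D" "dom D z = d1" and z': "z' \<in> arr D" "dom D z' = d0"
    and "cod D z = cod D z'"
    using assms(1,2) by (auto simp: hom_def)
  have cartesian: "\<forall>z12\<in>arr D. \<forall>z02\<in>arr D. \<forall>f01. cod D z12 = cod D z02 \<longrightarrow>
      f01 \<in> hom B (po (dom D z02)) (po (dom D z12)) \<longrightarrow> comp B (pa z12) f01 = pa z02 \<longrightarrow>
      (\<exists>!g. g \<in> hom D (dom D z02) (dom D z12) \<and> pa g = f01 \<and> comp D z12 g = z02)"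
    using fibration unfolding fib_in_groupoids_def by (elim conjE) assumption
  have "\<exists>!g. g \<in> hom D (dom D z') (dom D z) \<and> pa g = f \<and> comp D z g = z'"
    by (rule cartesian[rule_format]) (use z z' \<open>cod D z = cod D z'\<close> assms(3,4) in simp_all)
  then show ?thesis using z z' by simp
qed

lemma cartesian_cancel:
  assumes z: "z \<in> hom D d1 d2" and g: "g \<in> hom D d0 d1" and g': "g' \<in> hom D d0 d1"
    and "pa g = pa g'" and "comp D z g = comp D z g'"
  shows "g = g'"
proof -
  have "\<exists>!h. h \<in> hom D d0 d1 \<and> pa h = pa g \<and> comp D z h = comp D z g"
    by (rule cartesian_factor[OF z category_comp_in_hom[OF category g z]
          functor_hom[OF projection_functor g] functor_comp[OF projection_functor g z, symmetric]])
  then show ?thesis using g g' assms(4,5) by metis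
qed

lemma ident_base_in_hom: "x \<in> obj D \<Longrightarrow> ident B (po x) \<in> hom B (po x) (po x)"
  using functor_hom[OF projection_functor category_ident_in_hom[OF category]]
    functor_ident[OF projection_functor] by simp

text \<open>The base is not assumed to be a category; its identity laws are inherited from D on
  the arrows that lift, i.e.\ on all arrows into the image of the projection.\<close>

lemma base_comp_ident_left:
  assumes "d \<in> obj D" and "f \<in> hom B c (po d)"
  shows "comp B (ident B (po d)) f = f"
proof -
  obtain d' f' where f': "f' \<in> hom D d' d" "pa f' = f" using lift[OF assms] .
  have "comp B (ident B (po d)) f = pa (comp D (ident D d) f')"
    using functor_comp[OF projection_functor f'(1) category_ident_in_hom[OF category assms(1)]]
      functor_ident[OF projection_functor assms(1)] f'(2) by simp
  also have "\<dots> = f" using category_comp_ident_left[OF category f'(1)] f'(2) by simp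
  finally show ?thesis .
qed

lemma base_comp_ident_right:
  assumes "d \<in> obj D" and "f \<in> hom B c (po d)"
  shows "comp B f (ident B c) = f"
proof -
  obtain d' f' where f': "f' \<in> hom D d' d" "pa f' = f" "d' \<in> obj D" "po d' = c"
    using lift[OF assms] .
  have "comp B f (ident B c) = pa (comp D f' (ident D d'))"
    using functor_comp[OF projection_functor category_ident_in_hom[OF category f'(3)] f'(1)]
      functor_ident[OF projection_functor f'(3)] f'(2,4) by simp
  also have "\<dots> = f" using category_comp_ident_right[OF category f'(1)] f'(2) by simp
  finally show ?thesis .
qed

lemma vertical_iso:
  assumes g: "g \<in> hom D x y" and "po x = po y" and pg: "pa g = ident B (po x)"
  shows "is_iso D g"
proof -
  have x: "x \<in> obj D" and y: "y \<in> obj D" using category_obj_of_hom[OF category g] by blast+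
  have idc: "ident B (po x) \<in> hom B (po y) (po x)"
    using ident_base_in_hom[OF x] \<open>po x = po y\<close> by simp
  have idc_idem: "comp B (ident B (po x)) (ident B (po x)) = ident B (po x)"
    using base_comp_ident_left[OF x] ident_base_in_hom[OF x] by blast
  have "comp B (pa g) (ident B (po x)) = pa (ident D y)"
    using pg idc_idem functor_ident[OF projection_functor y] \<open>po x = po y\<close> by simp
  then obtain h where h: "h \<in> hom D y x" "pa h = ident B (po x)" "comp D g h = ident D y"
    using cartesian_factor[OF g category_ident_in_hom[OF category y] idc] by blast
  have hg: "comp D h g \<in> hom D x x" using category_comp_in_hom[OF category g h(1)] .
  have "pa (comp D h g) = pa (ident D x)"
    using functor_comp[OF projection_functor g h(1)] h(2) pg idc_idem
      functor_ident[OF projection_functor x] by simp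
  moreover have "comp D g (comp D h g) = comp D g (ident D x)"
    using category_comp_assoc[OF category g h(1) g] h(3)
      category_comp_ident_left[OF category g] category_comp_ident_right[OF category g] by simp
  ultimately have "comp D h g = ident D x"
    using cartesian_cancel[OF g hg category_ident_in_hom[OF category x]] by blast
  moreover have "g \<in> arr D" "dom D g = x" "cod D g = y" using g by (simp_all add: hom_def)
  ultimately show ?thesis using h(1,3) unfolding is_iso_def by blast
qed

end

lemma hker_obj_iff:
  "(h, e) \<in> obj (hker B G K P) \<longleftrightarrow>
     h \<in> obj (gcat G) \<and> e \<in> hom (gcat K) (mfun_o P h) (gunit_o K (gprj_o G h)) \<and>
     is_iso (gcat K) e \<and> gprj_a K e = ident B (gprj_o G h)"
  by (simp add: hker_def Let_def)

lemma hker_hom_iff: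
  "(a, z, b) \<in> hom (hker B G K P) a' b' \<longleftrightarrow>
     a = a' \<and> b = b' \<and> a \<in> obj (hker B G K P) \<and> b \<in> obj (hker B G K P) \<and>
     z \<in> hom (gcat G) (fst a) (fst b) \<and>
     comp (gcat K) (snd b) (mfun_a P z) = comp (gcat K) (gunit_a K (gprj_a G z)) (snd a)"
  by (auto simp: hker_def Let_def hom_def)

lemma hker_ident [simp]: "ident (hker B G K P) a = (a, ident (gcat G) (fst a), a)"
  by (simp add: hker_def Let_def)

lemma hker_comp [simp]: "comp (hker B G K P) (b', z', c) (a, z, b) = (a, comp (gcat G) z' z, c)"
  by (simp add: hker_def Let_def)

lemma hker_proj_o_apply [simp]: "hker_proj_o G (h, e) = gprj_o G h"
  by (simp add: hker_proj_o_def)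

lemma hker_proj_a_apply [simp]: "hker_proj_a G (a, z, b) = gprj_a G z"
  by (simp add: hker_proj_a_def)

locale fibred_functor_with_section =
  H: fibred_category "gcat G" B "gprj_o G" "gprj_a G" +
  K: fibred_category "gcat K" B "gprj_o K" "gprj_a K"
  for G :: "('c, 'cm, 'h, 'hm) grp2" and K :: "('c, 'cm, 'k, 'km) grp2"
    and B :: "('c, 'cm) category" +
  fixes P :: "('h, 'hm, 'c, 'k, 'km) grp2_hom"
  assumes unit_functor: "is_functor B (gcat K) (gunit_o K) (gunit_a K)"
    and unit_section_obj: "\<And>c. c \<in> obj B \<Longrightarrow> gprj_o K (gunit_o K c) = c"
    and unit_section_arr: "\<And>f. f \<in> arr B \<Longrightarrow> gprj_a K (gunit_a K f) = f"
    and map_functor: "is_functor (gcat G) (gcat K) (mfun_o P) (mfun_a P)"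
    and map_over_obj: "\<And>x. x \<in> obj (gcat G) \<Longrightarrow> gprj_o K (mfun_o P x) = gprj_o G x"
    and map_over_arr: "\<And>f. f \<in> arr (gcat G) \<Longrightarrow> gprj_a K (mfun_a P f) = gprj_a G f"
begin

lemma map_over_hom: "f \<in> hom (gcat G) a b \<Longrightarrow> gprj_a K (mfun_a P f) = gprj_a G f"
  using map_over_arr by (simp add: hom_def)

lemma unit_section_hom: "f \<in> hom B a b \<Longrightarrow> gprj_a K (gunit_a K f) = f"
  using unit_section_arr by (simp add: hom_def)

lemma hker_lift_arrow:
  assumes he: "(h, e) \<in> obj (hker B G K P)" and z: "z \<in> hom (gcat G) h' h"
  shows "\<exists>e'. ((h', e'), z, (h, e)) \<in> hom (hker B G K P) (h', e') (h, e)"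
proof -
  let ?c = "gprj_o G h'" and ?f = "gprj_a G z"
  have h': "h' \<in> obj (gcat G)" and h: "h \<in> obj (gcat G)"
    using category_obj_of_hom[OF H.category z] by blast+
  have c: "?c \<in> obj B" using functor_obj[OF H.projection_functor h'] .
  have e: "e \<in> hom (gcat K) (mfun_o P h) (gunit_o K (gprj_o G h))"
    "gprj_a K e = ident B (gprj_o G h)"
    using he by (simp_all add: hker_obj_iff)
  have f: "?f \<in> hom B ?c (gprj_o G h)" using functor_hom[OF H.projection_functor z] .
  have uf: "gunit_a K ?f \<in> hom (gcat K) (gunit_o K ?c) (gunit_o K (gprj_o G h))"
    using functor_hom[OF unit_functor f] .
  have pz: "mfun_a P z \<in> hom (gcat K) (mfun_o P h') (mfun_o P h)"
    using functor_hom[OF map_functor z] .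
  have epz: "comp (gcat K) e (mfun_a P z) \<in> hom (gcat K) (mfun_o P h') (gunit_o K (gprj_o G h))"
    using category_comp_in_hom[OF K.category pz e(1)] .
  have id_c: "ident B ?c \<in> hom B (gprj_o K (mfun_o P h')) (gprj_o K (gunit_o K ?c))"
    using H.ident_base_in_hom[OF h'] map_over_obj[OF h'] unit_section_obj[OF c] by simp
  have "comp B (gprj_a K (gunit_a K ?f)) (ident B ?c) = ?f"
    using unit_section_hom[OF f] H.base_comp_ident_right[OF h f] by simp
  also have "?f = comp B (gprj_a K e) (gprj_a K (mfun_a P z))"
    using e(2) map_over_hom[OF z] H.base_comp_ident_left[OF h f] by simp
  also have "\<dots> = gprj_a K (comp (gcat K) e (mfun_a P z))"
    using functor_comp[OF K.projection_functor pz e(1)] by simp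
  finally obtain e' where e': "e' \<in> hom (gcat K) (mfun_o P h') (gunit_o K ?c)"
    "gprj_a K e' = ident B ?c" "comp (gcat K) (gunit_a K ?f) e' = comp (gcat K) e (mfun_a P z)"
    using K.cartesian_factor[OF uf epz id_c] by blast
  have "is_iso (gcat K) e'"
    using K.vertical_iso[OF e'(1)] e'(2) map_over_obj[OF h'] unit_section_obj[OF c] by simp
  then have "((h', e'), z, (h, e)) \<in> hom (hker B G K P) (h', e') (h, e)"
    using he h' e'(1,2) e'(3)[symmetric] z by (simp add: hker_hom_iff hker_obj_iff)
  then show ?thesis ..
qed

lemma hker_hom_of_factor:
  assumes z1: "((h1, e1), z1, (h2, e2)) \<in> hom (hker B G K P) (h1, e1) (h2, e2)"
    and z0: "((h0, e0), z0, (h2, e2)) \<in> hom (hker B G K P) (h0, e0) (h2, e2)"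
    and w: "w \<in> hom (gcat G) h0 h1" and factor: "comp (gcat G) z1 w = z0"
  shows "((h0, e0), w, (h1, e1)) \<in> hom (hker B G K P) (h0, e0) (h1, e1)"
proof -
  let ?U = "\<lambda>f. gunit_a K (gprj_a G f)" and ?p = "mfun_a P" and ?comp = "comp (gcat K)"
  have z1_H: "z1 \<in> hom (gcat G) h1 h2"
    and e1_square: "?comp e2 (?p z1) = ?comp (?U z1) e1"
    and z0_square: "?comp e2 (?p z0) = ?comp (?U z0) e0"
    and ob0: "(h0, e0) \<in> obj (hker B G K P)" and ob1: "(h1, e1) \<in> obj (hker B G K P)"
    using z1 z0 by (simp_all add: hker_hom_iff)
  have h1: "h1 \<in> obj (gcat G)"
    and e0: "e0 \<in> hom (gcat K) (mfun_o P h0) (gunit_o K (gprj_o G h0))"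
      "gprj_a K e0 = ident B (gprj_o G h0)"
    and e1: "e1 \<in> hom (gcat K) (mfun_o P h1) (gunit_o K (gprj_o G h1))"
      "gprj_a K e1 = ident B (gprj_o G h1)"
    and e2: "e2 \<in> hom (gcat K) (mfun_o P h2) (gunit_o K (gprj_o G h2))"
    using ob0 ob1 z1 by (simp_all add: hker_obj_iff hker_hom_iff)
  have fw: "gprj_a G w \<in> hom B (gprj_o G h0) (gprj_o G h1)"
    using functor_hom[OF H.projection_functor w] .
  have fz1: "gprj_a G z1 \<in> hom B (gprj_o G h1) (gprj_o G h2)"
    using functor_hom[OF H.projection_functor z1_H] .
  have pw: "?p w \<in> hom (gcat K) (mfun_o P h0) (mfun_o P h1)"
    using functor_hom[OF map_functor w] .
  have pz1: "?p z1 \<in> hom (gcat K) (mfun_o P h1) (mfun_o P h2)"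
    using functor_hom[OF map_functor z1_H] .
  have Uw: "?U w \<in> hom (gcat K) (gunit_o K (gprj_o G h0)) (gunit_o K (gprj_o G h1))"
    using functor_hom[OF unit_functor fw] .
  have Uz1: "?U z1 \<in> hom (gcat K) (gunit_o K (gprj_o G h1)) (gunit_o K (gprj_o G h2))"
    using functor_hom[OF unit_functor fz1] .
  have left: "?comp e1 (?p w) \<in> hom (gcat K) (mfun_o P h0) (gunit_o K (gprj_o G h1))"
    using category_comp_in_hom[OF K.category pw e1(1)] .
  have right: "?comp (?U w) e0 \<in> hom (gcat K) (mfun_o P h0) (gunit_o K (gprj_o G h1))"
    using category_comp_in_hom[OF K.category e0(1) Uw] .
  have "gprj_a K (?comp e1 (?p w)) = gprj_a G w"
    using functor_comp[OF K.projection_functor pw e1(1)] e1(2) map_over_hom[OF w]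
      H.base_comp_ident_left[OF h1 fw] by simp
  also have "\<dots> = gprj_a K (?comp (?U w) e0)"
    using functor_comp[OF K.projection_functor e0(1) Uw] e0(2) unit_section_hom[OF fw]
      H.base_comp_ident_right[OF h1 fw] by simp
  finally have same_base: "gprj_a K (?comp e1 (?p w)) = gprj_a K (?comp (?U w) e0)" .
  have "?comp (?U z1) (?comp e1 (?p w)) = ?comp (?comp (?U z1) e1) (?p w)"
    using category_comp_assoc[OF K.category pw e1(1) Uz1] .
  also have "\<dots> = ?comp e2 (?comp (?p z1) (?p w))"
    using e1_square[symmetric] category_comp_assoc[OF K.category pw pz1 e2] by simp
  also have "\<dots> = ?comp (?U z0) e0"
    using functor_comp[OF map_functor w z1_H] factor z0_square by simp
  also have "\<dots> = ?comp (?comp (?U z1) (?U w)) e0"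
    using functor_comp[OF H.projection_functor w z1_H] functor_comp[OF unit_functor fw fz1]
      factor by simp
  also have "\<dots> = ?comp (?U z1) (?comp (?U w) e0)"
    using category_comp_assoc[OF K.category e0(1) Uw Uz1] by simp
  finally have "?comp e1 (?p w) = ?comp (?U w) e0"
    using K.cartesian_cancel[OF Uz1 left right same_base] by blast
  then show ?thesis using ob0 ob1 w by (simp add: hker_hom_iff)
qed

lemma hker_projection_functor: "is_functor (hker B G K P) B (hker_proj_o G) (hker_proj_a G)"
proof (rule is_functorI)
  fix a assume "a \<in> obj (hker B G K P)"
  then show "hker_proj_o G a \<in> obj B"
    using functor_obj[OF H.projection_functor] by (cases a) (simp add: hker_obj_iff)
next
  fix g a b assume "g \<in> hom (hker B G K P) a b"
  then show "hker_proj_a G g \<in> hom B (hker_proj_o G a) (hker_proj_o G b)"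
    using functor_hom[OF H.projection_functor]
    by (cases a, cases b, cases g) (simp add: hker_hom_iff)
next
  fix a assume "a \<in> obj (hker B G K P)"
  then show "hker_proj_a G (ident (hker B G K P) a) = ident B (hker_proj_o G a)"
    using functor_ident[OF H.projection_functor] by (cases a) (simp add: hker_obj_iff)
next
  fix g g' a b c
  assume g: "g \<in> hom (hker B G K P) a b" and g': "g' \<in> hom (hker B G K P) b c"
  obtain z z' where "g = (a, z, b)" "z \<in> hom (gcat G) (fst a) (fst b)"
    and "g' = (b, z', c)" "z' \<in> hom (gcat G) (fst b) (fst c)"
    using g g' by (cases g, cases g') (simp add: hker_hom_iff)
  then show "hker_proj_a G (comp (hker B G K P) g' g) = comp B (hker_proj_a G g') (hker_proj_a G g)"
    using functor_comp[OF H.projection_functor] by simp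
qed

lemma hker_lift:
  assumes d: "d \<in> obj (hker B G K P)" and f: "f \<in> hom B c (hker_proj_o G d)"
  shows "\<exists>d' f'. f' \<in> hom (hker B G K P) d' d \<and> hker_proj_a G f' = f"
proof -
  obtain h e where d_eq: "d = (h, e)" by (cases d)
  have "h \<in> obj (gcat G)" and "f \<in> hom B c (gprj_o G h)"
    using d f by (simp_all add: d_eq hker_obj_iff)
  then obtain h' z where "z \<in> hom (gcat G) h' h" and "gprj_a G z = f"
    using H.lift by metis
  moreover obtain e' where "((h', e'), z, (h, e)) \<in> hom (hker B G K P) (h', e') d"
    using hker_lift_arrow[of h e z h'] d calculation(1) by (auto simp: d_eq)
  ultimately show ?thesis by force
qed

lemma hker_cartesian_factor:
  assumes z: "z \<in> hom (hker B G K P) d1 d2" and z': "z' \<in> hom (hker B G K P) d0 d2"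
    and f: "f \<in> hom B (hker_proj_o G d0) (hker_proj_o G d1)"
    and over: "comp B (hker_proj_a G z) f = hker_proj_a G z'"
  shows "\<exists>!g. g \<in> hom (hker B G K P) d0 d1 \<and> hker_proj_a G g = f \<and> comp (hker B G K P) z g = z'"
proof -
  obtain h0 e0 h1 e1 h2 e2 where ds: "d0 = (h0, e0)" "d1 = (h1, e1)" "d2 = (h2, e2)"
    by (cases d0, cases d1, cases d2)
  obtain z1 z0 where zs: "z = (d1, z1, d2)" "z' = (d0, z0, d2)"
    using z z' by (cases z, cases z') (simp add: hker_hom_iff)
  have "z1 \<in> hom (gcat G) h1 h2" "z0 \<in> hom (gcat G) h0 h2"
    using z z' by (simp_all add: zs ds hker_hom_iff)
  then have "\<exists>!w. w \<in> hom (gcat G) h0 h1 \<and> gprj_a G w = f \<and> comp (gcat G) z1 w = z0"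
    using H.cartesian_factor f over by (simp add: zs ds)
  then obtain w where w: "w \<in> hom (gcat G) h0 h1 \<and> gprj_a G w = f \<and> comp (gcat G) z1 w = z0"
    and w_unique: "\<forall>w'. w' \<in> hom (gcat G) h0 h1 \<and> gprj_a G w' = f \<and>
      comp (gcat G) z1 w' = z0 \<longrightarrow> w' = w"
    by (rule ex1E)
  show ?thesis
  proof (rule ex1I)
    have "(d0, w, d1) \<in> hom (hker B G K P) d0 d1"
      unfolding ds using z z' w
      by (intro hker_hom_of_factor[of h1 e1 z1 h2 e2 h0 e0 z0 w]) (simp_all add: zs ds)
    then show "(d0, w, d1) \<in> hom (hker B G K P) d0 d1 \<and> hker_proj_a G (d0, w, d1) = f \<and>
        comp (hker B G K P) z (d0, w, d1) = z'"
      using w by (simp add: zs)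
  next
    fix g
    assume g: "g \<in> hom (hker B G K P) d0 d1 \<and> hker_proj_a G g = f \<and> comp (hker B G K P) z g = z'"
    then obtain w' where "g = (d0, w', d1)" and "w' \<in> hom (gcat G) h0 h1"
      by (cases g) (simp add: ds hker_hom_iff)
    moreover have "gprj_a G w' = f \<and> comp (gcat G) z1 w' = z0"
      using g calculation(1) by (simp add: zs)
    ultimately show "g = (d0, w, d1)" using w_unique by blast
  qed
qed

theorem fib_in_groupoids_hker: "fib_in_groupoids (hker B G K P) B (hker_proj_o G) (hker_proj_a G)"
  by (rule fib_in_groupoidsI[OF hker_projection_functor hker_lift hker_cartesian_factor])

end

lemma two_group_hom_fibred_functor_with_section:
  assumes G: "two_group_over B G" and K: "two_group_over B K" and P: "two_group_hom B G K P"
  shows "fibred_functor_with_section G K B P"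
proof -
  have "is_category (gcat G) \<and> fib_in_groupoids (gcat G) B (gprj_o G) (gprj_a G)"
    using G unfolding two_group_over_def Let_def by (elim conjE) (intro conjI; assumption)
  moreover have "is_category (gcat K) \<and> fib_in_groupoids (gcat K) B (gprj_o K) (gprj_a K) \<and>
      is_functor B (gcat K) (gunit_o K) (gunit_a K) \<and>
      (\<forall>c\<in>obj B. gprj_o K (gunit_o K c) = c) \<and> (\<forall>f\<in>arr B. gprj_a K (gunit_a K f) = f)"
    using K unfolding two_group_over_def Let_def by (elim conjE) (intro conjI; assumption)
  moreover have "is_functor (gcat G) (gcat K) (mfun_o P) (mfun_a P) \<and>
      (\<forall>x\<in>obj (gcat G). gprj_o K (mfun_o P x) = gprj_o G x) \<and>
      (\<forall>f\<in>arr (gcat G). gprj_a K (mfun_a P f) = gprj_a G f)"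
    using P unfolding two_group_hom_def Let_def by (elim conjE) (intro conjI; assumption)
  ultimately show ?thesis
    by (intro fibred_functor_with_section.intro fibred_category.intro
        fibred_functor_with_section_axioms.intro) simp_all
qed

theorem lemma5p18:
  fixes G :: "(nat, cart_arr, 'h, 'hm) grp2"
    and K :: "(nat, cart_arr, 'k, 'km) grp2"
    and P :: "('h, 'hm, nat, 'k, 'km) grp2_hom"
  assumes "smooth_2group_hom G K P"
  shows "fib_in_groupoids (hker Cart G K P) Cart (hker_proj_o G) (hker_proj_a G)"
proof -
  have "fibred_functor_with_section G K Cart P"
    using assms unfolding smooth_2group_hom_def smooth_2group_def
    by (intro two_group_hom_fibred_functor_with_section) simp_all
  then show ?thesis by (rule fibred_functor_with_section.fib_in_groupoids_hker)
qed

end
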